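(* Let $n\ge1$, suppose $\mathcal M$ is injective on $\Omega$, and let $W=(w_1,u_1,\dots,w_n,u_n,\sigma)\in\Omega$ and $M=\mathcal M(W)$. Define $$g(u;W)=\Delta_{2n+1}(u,\sigma)-\sum_{j=0}^{2n}a_j(M)\Delta_j(u,\sigma).$$ Then there is a real number $\tilde u(W)$ such that $$g(u;W)=(u-u_1)^2\cdots(u-u_n)^2(u-\tilde u(W)).$$
   Context: Let $\mathcal K:\mathbb R\to[0,\infty)$ be a kernel with $\mathfrak m_j:=\int_{\mathbb R}\xi^j\mathcal K(\xi)\,d\xi<\infty$ for all $j$; normalized: $\mathfrak m_0=1,\mathfrak m_1=0,\mathfrak m_2=1$. Let $\Delta_j(u,\sigma)=\int\xi^j\frac1\sigma\mathcal K(\frac{\xi-u}{\sigma})d\xi=\sum_{k=0}^j\binom jk\mathfrak m_k\sigma^ku^{j-k}$, a polynomial in $u$. For $W=(w_1,u_1,\dots,w_n,u_n,\sigma)$, $\mathcal M(W)=(M_0,\dots,M_{2n})^T$ with $M_j=\sum_{i=1}^nw_i\Delta_j(u_i,\sigma)$; $\Omega=\{W:w_i>0\ \forall i,\ u_1<\dots<u_n,\ \sigma>0\}$. On $\mathcal M(\Omega)$, $\mathcal M_{2n+1}(M)=\sum_iw_i\Delta_{2n+1}(u_i,\sigma)$ with $W=\mathcal M^{-1}(M)$, and $a_j(M)=\partial\mathcal M_{2n+1}/\partial M_j$, $j=0,\dots,2n$. *)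

theory Defs
  imports "HOL-Analysis.Analysis"
begin

definition kmom :: "(real \<Rightarrow> real) \<Rightarrow> nat \<Rightarrow> real" where
  "kmom K k = (\<integral>\<xi>. \<xi> ^ k * K \<xi> \<partial>lborel)"

definition Delta :: "(real \<Rightarrow> real) \<Rightarrow> nat \<Rightarrow> real \<Rightarrow> real \<Rightarrow> real" where
  "Delta K j u \<sigma> = (\<Sum>k=0..j. real (j choose k) * kmom K k * \<sigma> ^ k * u ^ (j - k))"

text \<open>Parameters W = (w, u, sigma); w i, u i meaningful for i in {1..n},
  and fixed to 0 outside {1..n} so that the parameter space is a faithful copy of R^(2n+1).\<close>
type_synonym param = "(nat \<Rightarrow> real) \<times> (nat \<Rightarrow> real) \<times> real"

definition Omega :: "nat \<Rightarrow> param set" where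
  "Omega n = {(w, u, \<sigma>). (\<forall>i\<in>{1..n}. w i > 0) \<and>
                         (\<forall>i\<in>{1..n}. \<forall>i'\<in>{1..n}. i < i' \<longrightarrow> u i < u i') \<and> \<sigma> > 0 \<and>
                         (\<forall>i. i \<notin> {1..n} \<longrightarrow> w i = 0 \<and> u i = 0)}"

definition Mmap :: "(real \<Rightarrow> real) \<Rightarrow> nat \<Rightarrow> param \<Rightarrow> (nat \<Rightarrow> real)" where
  "Mmap K n W = (case W of (w, u, \<sigma>) \<Rightarrow>
      (\<lambda>j. if j \<le> 2 * n then (\<Sum>i=1..n. w i * Delta K j (u i) \<sigma>) else 0))"

definition Mnext :: "(real \<Rightarrow> real) \<Rightarrow> nat \<Rightarrow> (nat \<Rightarrow> real) \<Rightarrow> real" where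
  "Mnext K n M = (case the_inv_into (Omega n) (Mmap K n) M of (w, u, \<sigma>) \<Rightarrow>
      (\<Sum>i=1..n. w i * Delta K (2 * n + 1) (u i) \<sigma>))"

definition acoef :: "(real \<Rightarrow> real) \<Rightarrow> nat \<Rightarrow> (nat \<Rightarrow> real) \<Rightarrow> nat \<Rightarrow> real" where
  "acoef K n M j = deriv (\<lambda>t. Mnext K n (M(j := M j + t))) 0"

text \<open>(Frechet) differentiability of F : R^N -> R at M, where R^N is the set of
  nat-indexed vectors supported on {0..<N}, with the Euclidean norm.\<close>
definition diff_at :: "nat \<Rightarrow> ((nat \<Rightarrow> real) \<Rightarrow> real) \<Rightarrow> (nat \<Rightarrow> real) \<Rightarrow> bool" where
  "diff_at N F M \<longleftrightarrow> (\<exists>c::nat \<Rightarrow> real. \<forall>\<epsilon>>0. \<exists>\<delta>>0. \<forall>h::nat \<Rightarrow> real.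
      (\<forall>j\<ge>N. h j = 0) \<longrightarrow> sqrt (\<Sum>j<N. (h j)^2) < \<delta> \<longrightarrow>
      \<bar>F (\<lambda>j. M j + h j) - F M - (\<Sum>j<N. c j * h j)\<bar> \<le> \<epsilon> * sqrt (\<Sum>j<N. (h j)^2))"

definition gfun :: "(real \<Rightarrow> real) \<Rightarrow> nat \<Rightarrow> param \<Rightarrow> real \<Rightarrow> real" where
  "gfun K n W x = (case W of (w, u, \<sigma>) \<Rightarrow>
      Delta K (2 * n + 1) x \<sigma> - (\<Sum>j=0..2*n. acoef K n (Mmap K n W) j * Delta K j x \<sigma>))"

end

theory Submission
  imports Defs "HOL-Computational_Algebra.Polynomial"
begin

(*
  Let c be the gradient of M_{2n+1} at M(W); then a_j(M) = c_j, so g(.;W) is the polynomial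
  Delta_{2n+1} - sum_j c_j Delta_j, monic of degree 2n+1 because m_0 = 1.  On Omega the function M_{2n+1}(M(W')) equals the
  (2n+1)-st moment sum_i w'_i Delta_{2n+1}(u'_i, sigma').  Differentiating this identity by the
  chain rule along W + t e_{w_i} gives g(u_i) = 0, and along W + t e_{u_i} gives
  w_i g'(u_i) = 0.  Hence g has a double root at each of the n distinct nodes u_i, and its
  remaining factor is linear and monic.
*)

definition has_gradient_at ::
    "nat \<Rightarrow> ((nat \<Rightarrow> real) \<Rightarrow> real) \<Rightarrow> (nat \<Rightarrow> real) \<Rightarrow> (nat \<Rightarrow> real) \<Rightarrow> bool" where
  "has_gradient_at N F c M \<longleftrightarrow> (\<forall>\<epsilon>>0. \<exists>\<delta>>0. \<forall>h::nat \<Rightarrow> real.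
      (\<forall>j\<ge>N. h j = 0) \<longrightarrow> sqrt (\<Sum>j<N. (h j)^2) < \<delta> \<longrightarrow>
      \<bar>F (\<lambda>j. M j + h j) - F M - (\<Sum>j<N. c j * h j)\<bar> \<le> \<epsilon> * sqrt (\<Sum>j<N. (h j)^2))"

lemma diff_at_iff_has_gradient_at: "diff_at N F M \<longleftrightarrow> (\<exists>c. has_gradient_at N F c M)"
  unfolding diff_at_def has_gradient_at_def ..

lemma has_gradient_at_chain:
  fixes G :: "real \<Rightarrow> nat \<Rightarrow> real"
  assumes grad: "has_gradient_at N F c M"
    and G0: "G 0 = M" and G_fixed: "\<And>t j. N \<le> j \<Longrightarrow> G t j = M j"
    and G_deriv: "\<And>j. j < N \<Longrightarrow> ((\<lambda>t. G t j) has_real_derivative G' j) (at 0)"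
  shows "((\<lambda>t. F (G t)) has_real_derivative (\<Sum>j<N. c j * G' j)) (at 0)"
proof -
  define h where "h t j = G t j - M j" for t j
  define E where "E t = F (G t) - F M - (\<Sum>j<N. c j * h t j)" for t
  define R where "R = sqrt (\<Sum>j<N. (G' j)^2)"
  define r where "r t = sqrt (\<Sum>j<N. (h t j / t)^2)" for t
  have quot: "((\<lambda>t. h t j / t) \<longlongrightarrow> G' j) (at 0)" if "j < N" for j
    using G_deriv[OF that] G0 by (simp add: has_field_derivative_iff h_def)
  have r_lim: "(r \<longlongrightarrow> R) (at 0)"
    unfolding r_def R_def by (intro tendsto_intros quot) simp
  have "((\<lambda>t. h t j) \<longlongrightarrow> 0) (at 0)" if "j < N" for j
    using DERIV_isCont[OF G_deriv[OF that]] G0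
    by (simp add: h_def isCont_def LIM_zero)
  then have h_lim: "((\<lambda>t. sqrt (\<Sum>j<N. (h t j)^2)) \<longlongrightarrow> 0) (at 0)"
    using tendsto_real_sqrt[OF tendsto_sum[of "{..<N}" "\<lambda>j t. (h t j)^2" "\<lambda>_. 0"]]
    by (simp add: tendsto_power)
  \<comment> \<open>The remainder is o(|h t|) while |h t| / |t| = r t stays bounded.\<close>
  have rem: "((\<lambda>t. E t / t) \<longlongrightarrow> 0) (at 0)"
  proof (rule tendstoI)
    fix e :: real assume "0 < e"
    have "0 \<le> R" by (simp add: R_def sum_nonneg)
    define \<epsilon> where "\<epsilon> = e / (R + 1)"
    have "0 < \<epsilon>" using \<open>0 < e\<close> \<open>0 \<le> R\<close> by (simp add: \<epsilon>_def)
    then obtain \<delta> where "0 < \<delta>" and small: "\<And>h. \<forall>j\<ge>N. h j = 0 \<Longrightarrow> sqrt (\<Sum>j<N. (h j)^2) < \<delta> \<Longrightarrow>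
        \<bar>F (\<lambda>j. M j + h j) - F M - (\<Sum>j<N. c j * h j)\<bar> \<le> \<epsilon> * sqrt (\<Sum>j<N. (h j)^2)"
      using grad unfolding has_gradient_at_def by blast
    have "eventually (\<lambda>t. t \<noteq> 0) (at (0::real))"
      by (simp add: eventually_at_filter)
    moreover have "eventually (\<lambda>t. sqrt (\<Sum>j<N. (h t j)^2) < \<delta>) (at 0)"
      using order_tendstoD(2)[OF h_lim \<open>0 < \<delta>\<close>] .
    moreover have "eventually (\<lambda>t. r t < R + 1) (at 0)"
      using order_tendstoD(2)[OF r_lim] by simp
    ultimately show "eventually (\<lambda>t. dist (E t / t) 0 < e) (at 0)"
    proof eventually_elim
      case (elim t)
      have "(\<lambda>j. M j + h t j) = G t" by (simp add: h_def)
      moreover have "\<forall>j\<ge>N. h t j = 0" by (simp add: h_def G_fixed)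
      ultimately have "\<bar>E t\<bar> \<le> \<epsilon> * sqrt (\<Sum>j<N. (h t j)^2)"
        using small[of "h t"] elim(2) by (simp add: E_def)
      also have "sqrt (\<Sum>j<N. (h t j)^2) = \<bar>t\<bar> * r t"
        using elim(1) by (simp add: r_def power_divide real_sqrt_divide flip: sum_divide_distrib)
      finally have "\<bar>E t / t\<bar> \<le> \<epsilon> * r t"
        using elim(1) by (simp add: abs_divide divide_le_eq mult_ac)
      also have "\<dots> < \<epsilon> * (R + 1)" using elim(3) \<open>0 < \<epsilon>\<close> by simp
      also have "\<dots> = e" using \<open>0 \<le> R\<close> by (simp add: \<epsilon>_def)
      finally show ?case by simp
    qed
  qed
  have "((\<lambda>t. (\<Sum>j<N. c j * (h t j / t)) + E t / t) \<longlongrightarrow> (\<Sum>j<N. c j * G' j) + 0) (at 0)"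
    by (intro tendsto_intros quot rem) simp
  moreover have "eventually (\<lambda>t. (\<Sum>j<N. c j * (h t j / t)) + E t / t = (F (G t) - F (G 0)) / (t - 0)) (at 0)"
    by (simp add: E_def G0 diff_divide_distrib sum_divide_distrib)
  ultimately show ?thesis
    unfolding has_field_derivative_iff by (simp add: tendsto_cong)
qed

lemma has_gradient_at_partial:
  assumes "has_gradient_at N F c M" "j < N"
  shows "((\<lambda>t. F (M(j := M j + t))) has_real_derivative c j) (at 0)"
proof -
  have "((\<lambda>t. F (M(j := M j + t))) has_real_derivative (\<Sum>k<N. c k * of_bool (k = j))) (at 0)"
    using assms(2) by (intro has_gradient_at_chain[OF assms(1)]) (auto intro!: derivative_eq_intros)
  then show ?thesis using assms(2) by simp
qed

lemma double_root_dvd: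
  fixes p :: "'a::idom poly"
  assumes "poly p a = 0" "poly (pderiv p) a = 0"
  shows "[:-a, 1:]^2 dvd p"
proof -
  obtain q where q: "p = [:-a, 1:] * q"
    using assms(1) by (auto simp: poly_eq_0_iff_dvd)
  have "poly (pderiv p) a = poly q a"
    unfolding q pderiv_mult by (simp add: pderiv_pCons)
  then have "poly q a = 0" using assms(2) by simp
  then obtain r where r: "q = [:-a, 1:] * r" by (auto simp: poly_eq_0_iff_dvd)
  have "p = [:-a, 1:]^2 * r"
    unfolding q r power2_eq_square by (simp only: mult.assoc)
  then show ?thesis by simp
qed

lemma prod_double_roots_dvd:
  fixes p :: "'a::idom poly"
  assumes "finite I" "inj_on u I"
    and "\<And>i. i \<in> I \<Longrightarrow> poly p (u i) = 0" "\<And>i. i \<in> I \<Longrightarrow> poly (pderiv p) (u i) = 0"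
  shows "(\<Prod>i\<in>I. [:-u i, 1:]^2) dvd p"
  using assms
proof (induction I arbitrary: p rule: finite_induct)
  case empty
  then show ?case by simp
next
  case (insert a I)
  define s where "s = [:-u a, 1:]^2"
  have "s dvd p"
    using insert.prems(2,3)[of a] by (simp add: s_def double_root_dvd)
  then obtain r where r: "p = s * r" ..
  have "poly s (u i) \<noteq> 0" if "i \<in> I" for i
    using insert.hyps(2) insert.prems(1) that by (auto simp: s_def inj_on_def)
  moreover have "poly p (u i) = 0" "poly (pderiv p) (u i) = 0" if "i \<in> I" for i
    using insert.prems(2,3) that by auto
  ultimately have "poly r (u i) = 0 \<and> poly (pderiv r) (u i) = 0" if "i \<in> I" for i
    using that by (simp add: r pderiv_mult)
  then have "(\<Prod>i\<in>I. [:-u i, 1:]^2) dvd r"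
    using insert.IH insert.prems(1) by (auto intro: inj_on_subset)
  then show ?case
    using insert.hyps by (simp add: r s_def)
qed

lemma monic_with_double_roots_factor:
  fixes p :: "'a::idom poly"
  assumes "finite I" "inj_on u I"
    and "degree p = 2 * card I + 1" "lead_coeff p = 1"
    and "\<And>i. i \<in> I \<Longrightarrow> poly p (u i) = 0" "\<And>i. i \<in> I \<Longrightarrow> poly (pderiv p) (u i) = 0"
  shows "\<exists>b. \<forall>x. poly p x = (\<Prod>i\<in>I. (x - u i)^2) * (x - b)"
proof -
  define q where "q = (\<Prod>i\<in>I. [:-u i, 1:]^2)"
  obtain r where p: "p = q * r"
    using prod_double_roots_dvd[OF assms(1,2,5,6)] by (auto simp: q_def)
  have lc_q: "lead_coeff q = 1"
    by (simp add: q_def lead_coeff_prod lead_coeff_power)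
  have "q \<noteq> 0" "degree q = 2 * card I"
    by (simp_all add: q_def prod_zero_iff[OF assms(1)] degree_prod_eq_sum_degree degree_power_eq)
  moreover have "r \<noteq> 0" using assms(4) p by auto
  ultimately have "degree r = 1"
    using assms(3) by (simp add: p degree_mult_eq)
  moreover have "lead_coeff r = 1"
    using assms(4) lc_q by (metis p lead_coeff_mult mult_1)
  ultimately have "poly r x = x - (- coeff r 0)" for x
    by (simp add: poly_altdef)
  moreover have "poly q x = (\<Prod>i\<in>I. (x - u i)^2)" for x
    by (simp add: q_def poly_prod)
  ultimately show ?thesis
    by (intro exI[of _ "- coeff r 0"]) (simp add: p)
qed

text \<open>The of_bool form makes perturbed parameters differentiable in t by derivative_eq_intros.\<close>
lemma fun_upd_add_eq:
  fixes f :: "'a \<Rightarrow> 'b::semiring_1"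
  shows "(f(i := f i + t)) k = f k + of_bool (k = i) * t"
  by auto

lemma sum_delta_of_bool:
  fixes g :: "'a \<Rightarrow> 'b::comm_semiring_1"
  assumes "finite A" "i \<in> A"
  shows "(\<Sum>k\<in>A. of_bool (k = i) * g k) = g i"
  using assms by (simp add: of_bool_def if_distrib[where f = "\<lambda>x. x * _"] cong: if_cong)

definition Delta_poly :: "(real \<Rightarrow> real) \<Rightarrow> nat \<Rightarrow> real \<Rightarrow> real poly" where
  "Delta_poly K j \<sigma> = (\<Sum>k=0..j. monom (real (j choose k) * kmom K k * \<sigma> ^ k) (j - k))"

lemma poly_Delta_poly [simp]: "poly (Delta_poly K j \<sigma>) x = Delta K j x \<sigma>"
  by (simp add: Delta_poly_def Delta_def poly_sum poly_monom)

lemma coeff_Delta_poly_above: "j < m \<Longrightarrow> coeff (Delta_poly K j \<sigma>) m = 0"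
  unfolding Delta_poly_def coeff_sum coeff_monom by (intro sum.neutral) auto

lemma coeff_Delta_poly_top: "coeff (Delta_poly K j \<sigma>) j = kmom K 0"
proof -
  have "coeff (Delta_poly K j \<sigma>) j = (\<Sum>k=0..j. if k = 0 then kmom K 0 else 0)"
    unfolding Delta_poly_def coeff_sum coeff_monom by (intro sum.cong) auto
  then show ?thesis by simp
qed

definition residual_poly :: "(real \<Rightarrow> real) \<Rightarrow> nat \<Rightarrow> (nat \<Rightarrow> real) \<Rightarrow> real \<Rightarrow> real poly" where
  "residual_poly K N c \<sigma> = Delta_poly K N \<sigma> - (\<Sum>j<N. smult (c j) (Delta_poly K j \<sigma>))"

lemma poly_residual_poly:
  "poly (residual_poly K N c \<sigma>) x = Delta K N x \<sigma> - (\<Sum>j<N. c j * Delta K j x \<sigma>)"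
  by (simp add: residual_poly_def poly_sum)

lemma poly_pderiv_residual_poly:
  "poly (pderiv (residual_poly K N c \<sigma>)) x =
     poly (pderiv (Delta_poly K N \<sigma>)) x - (\<Sum>j<N. c j * poly (pderiv (Delta_poly K j \<sigma>)) x)"
  by (simp add: residual_poly_def pderiv_diff pderiv_smult poly_sum higher_pderiv_sum[of 1, simplified])

lemma
  assumes "kmom K 0 = 1"
  shows degree_residual_poly: "degree (residual_poly K N c \<sigma>) = N"
    and lead_coeff_residual_poly: "lead_coeff (residual_poly K N c \<sigma>) = 1"
proof -
  have top: "coeff (residual_poly K N c \<sigma>) N = 1"
    using assms by (simp add: residual_poly_def coeff_sum coeff_Delta_poly_top coeff_Delta_poly_above)
  have "coeff (residual_poly K N c \<sigma>) m = 0" if "N < m" for m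
    using that by (simp add: residual_poly_def coeff_sum coeff_Delta_poly_above)
  then have "degree (residual_poly K N c \<sigma>) \<le> N" by (intro degree_le) auto
  moreover have "N \<le> degree (residual_poly K N c \<sigma>)" using top by (intro le_degree) simp
  ultimately show "degree (residual_poly K N c \<sigma>) = N" by simp
  with top show "lead_coeff (residual_poly K N c \<sigma>) = 1" by simp
qed

definition moment :: "(real \<Rightarrow> real) \<Rightarrow> nat \<Rightarrow> nat \<Rightarrow> param \<Rightarrow> real" where
  "moment K n j W = (case W of (w, u, \<sigma>) \<Rightarrow> \<Sum>i=1..n. w i * Delta K j (u i) \<sigma>)"

lemma Mmap_eq_moment: "Mmap K n W j = (if j \<le> 2 * n then moment K n j W else 0)"
  by (simp add: Mmap_def moment_def split: prod.split)

lemma Mnext_Mmap: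
  assumes "inj_on (Mmap K n) (Omega n)" "W \<in> Omega n"
  shows "Mnext K n (Mmap K n W) = moment K n (2 * n + 1) W"
  using the_inv_into_f_f[OF assms] by (simp add: Mnext_def moment_def split: prod.split)

lemma moment_deriv_along_curve:
  fixes Wc :: "real \<Rightarrow> param"
  assumes inj: "inj_on (Mmap K n) (Omega n)"
    and grad: "has_gradient_at (2 * n + 1) (Mnext K n) c (Mmap K n (Wc 0))"
    and in_Omega: "eventually (\<lambda>t. Wc t \<in> Omega n) (nhds 0)"
    and D: "\<And>j. j \<le> 2 * n + 1 \<Longrightarrow> ((\<lambda>t. moment K n j (Wc t)) has_real_derivative D j) (at 0)"
  shows "D (2 * n + 1) = (\<Sum>j<2 * n + 1. c j * D j)"
proof -
  have "((\<lambda>t. Mnext K n (Mmap K n (Wc t))) has_real_derivative (\<Sum>j<2 * n + 1. c j * D j)) (at 0)"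
    by (rule has_gradient_at_chain[OF grad]) (auto simp: Mmap_eq_moment intro: D)
  moreover have "eventually (\<lambda>t. Mnext K n (Mmap K n (Wc t)) = moment K n (2 * n + 1) (Wc t)) (nhds 0)"
    using in_Omega by (rule eventually_mono) (rule Mnext_Mmap[OF inj])
  ultimately have "((\<lambda>t. moment K n (2 * n + 1) (Wc t)) has_real_derivative (\<Sum>j<2 * n + 1. c j * D j)) (at 0)"
    by (simp add: DERIV_cong_ev)
  then show ?thesis using D[of "2 * n + 1"] by (simp add: DERIV_unique)
qed

lemma moment_weight_perturb_deriv:
  assumes "i \<in> {1..n}"
  shows "((\<lambda>t. moment K n j (w(i := w i + t), u, \<sigma>)) has_real_derivative Delta K j (u i) \<sigma>) (at 0)"
proof -
  have "((\<lambda>t. \<Sum>k=1..n. (w k + of_bool (k = i) * t) * Delta K j (u k) \<sigma>) has_real_derivative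
      (\<Sum>k=1..n. of_bool (k = i) * Delta K j (u k) \<sigma>)) (at 0)"
    by (auto intro!: derivative_eq_intros)
  then show ?thesis
    using assms by (simp add: moment_def fun_upd_add_eq sum_delta_of_bool del: fun_upd_apply)
qed

lemma moment_node_perturb_deriv:
  assumes "i \<in> {1..n}"
  shows "((\<lambda>t. moment K n j (w, u(i := u i + t), \<sigma>)) has_real_derivative
      w i * poly (pderiv (Delta_poly K j \<sigma>)) (u i)) (at 0)"
proof -
  have "((\<lambda>t. \<Sum>k=1..n. w k * poly (Delta_poly K j \<sigma>) (u k + of_bool (k = i) * t)) has_real_derivative
      (\<Sum>k=1..n. of_bool (k = i) * poly (pderiv (Delta_poly K j \<sigma>)) (u k) * w k)) (at 0)"
    by (intro derivative_eq_intros DERIV_chain2[OF poly_DERIV]) auto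
  then show ?thesis
    using assms
    by (simp add: moment_def fun_upd_add_eq mult.assoc sum_delta_of_bool mult.commute[of "w i"]
        del: fun_upd_apply)
qed

lemma eventually_weight_perturb_in_Omega:
  assumes W: "(w, u, \<sigma>) \<in> Omega n" and i: "i \<in> {1..n}"
  shows "eventually (\<lambda>t. (w(i := w i + t), u, \<sigma>) \<in> Omega n) (nhds 0)"
proof -
  have lim: "((\<lambda>t. w i + t) \<longlongrightarrow> w i) (nhds 0)"
    by (auto intro!: tendsto_eq_intros filterlim_ident)
  have "0 < w i" using W i by (simp add: Omega_def)
  then have "eventually (\<lambda>t. 0 < w i + t) (nhds 0)" by (rule order_tendstoD(1)[OF lim])
  then show ?thesis using W i by (auto simp: Omega_def elim!: eventually_mono)
qed

lemma eventually_node_perturb_in_Omega: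
  assumes W: "(w, u, \<sigma>) \<in> Omega n" and i: "i \<in> {1..n}"
  shows "eventually (\<lambda>t. (w, u(i := u i + t), \<sigma>) \<in> Omega n) (nhds 0)"
proof -
  have "eventually (\<lambda>t. a < b \<longrightarrow> (u(i := u i + t)) a < (u(i := u i + t)) b) (nhds 0)"
    if "a \<in> {1..n}" "b \<in> {1..n}" for a b
  proof (cases "a < b")
    case True
    have lim: "((\<lambda>t. u b + of_bool (b = i) * t - (u a + of_bool (a = i) * t)) \<longlongrightarrow> u b - u a) (nhds 0)"
      by (auto intro!: tendsto_eq_intros filterlim_ident)
    have "0 < u b - u a" using W that True by (simp add: Omega_def)
    then have "eventually (\<lambda>t. 0 < u b + of_bool (b = i) * t - (u a + of_bool (a = i) * t)) (nhds 0)"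
      by (rule order_tendstoD(1)[OF lim])
    then show ?thesis by (rule eventually_mono) (simp add: fun_upd_add_eq del: fun_upd_apply)
  qed simp
  then have "eventually (\<lambda>t. \<forall>a\<in>{1..n}. \<forall>b\<in>{1..n}. a < b \<longrightarrow> (u(i := u i + t)) a < (u(i := u i + t)) b) (nhds 0)"
    by (simp add: eventually_ball_finite_distrib del: fun_upd_apply)
  then show ?thesis using W i by (auto simp: Omega_def elim!: eventually_mono)
qed

lemma acoef_eq_gradient:
  assumes "has_gradient_at (2 * n + 1) (Mnext K n) c M" "j < 2 * n + 1"
  shows "acoef K n M j = c j"
  unfolding acoef_def using has_gradient_at_partial[OF assms] by (rule DERIV_imp_deriv)

lemma gfun_eq_residual_poly:
  assumes "has_gradient_at (2 * n + 1) (Mnext K n) c (Mmap K n (w, u, \<sigma>))"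
  shows "gfun K n (w, u, \<sigma>) x = poly (residual_poly K (2 * n + 1) c \<sigma>) x"
proof -
  have "{0..2 * n} = {..<2 * n + 1}" by auto
  then show ?thesis
    by (simp add: gfun_def poly_residual_poly acoef_eq_gradient[OF assms])
qed

context
  fixes K n w u \<sigma> c
  assumes inj: "inj_on (Mmap K n) (Omega n)"
    and W: "(w, u, \<sigma>) \<in> Omega n"
    and grad: "has_gradient_at (2 * n + 1) (Mnext K n) c (Mmap K n (w, u, \<sigma>))"
begin

lemma residual_poly_root_at_node:
  assumes i: "i \<in> {1..n}"
  shows "poly (residual_poly K (2 * n + 1) c \<sigma>) (u i) = 0"
proof -
  have "Delta K (2 * n + 1) (u i) \<sigma> = (\<Sum>j<2 * n + 1. c j * Delta K j (u i) \<sigma>)"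
    using grad
    by (intro moment_deriv_along_curve[where Wc = "\<lambda>t. (w(i := w i + t), u, \<sigma>)", OF inj])
      (simp_all add: eventually_weight_perturb_in_Omega[OF W i] moment_weight_perturb_deriv[OF i])
  then show ?thesis by (simp add: poly_residual_poly)
qed

lemma pderiv_residual_poly_root_at_node:
  assumes i: "i \<in> {1..n}"
  shows "poly (pderiv (residual_poly K (2 * n + 1) c \<sigma>)) (u i) = 0"
proof -
  let ?D = "\<lambda>j. w i * poly (pderiv (Delta_poly K j \<sigma>)) (u i)"
  have "?D (2 * n + 1) = (\<Sum>j<2 * n + 1. c j * ?D j)"
    using grad
    by (intro moment_deriv_along_curve[where Wc = "\<lambda>t. (w, u(i := u i + t), \<sigma>)", OF inj])
      (simp_all add: eventually_node_perturb_in_Omega[OF W i] moment_node_perturb_deriv[OF i])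
  moreover have "w i * poly (pderiv (residual_poly K (2 * n + 1) c \<sigma>)) (u i) =
      ?D (2 * n + 1) - (\<Sum>j<2 * n + 1. c j * ?D j)"
    by (simp add: poly_pderiv_residual_poly right_diff_distrib sum_distrib_left mult.left_commute
        del: sum.lessThan_Suc)
  moreover have "0 < w i" using W i by (simp add: Omega_def)
  ultimately show ?thesis by simp
qed

end

theorem proposition4p1:
  fixes K :: "real \<Rightarrow> real" and n :: nat
    and w u :: "nat \<Rightarrow> real" and \<sigma> :: real
  assumes K_nonneg: "\<And>\<xi>. K \<xi> \<ge> 0"
    and K_moments: "\<And>j. integrable lborel (\<lambda>\<xi>. \<xi> ^ j * K \<xi>)"
    and m0: "kmom K 0 = 1" and m1: "kmom K 1 = 0" and m2: "kmom K 2 = 1"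
    and n_ge: "n \<ge> 1"
    and inj: "inj_on (Mmap K n) (Omega n)"
    and W_in: "(w, u, \<sigma>) \<in> Omega n"
    and diff: "diff_at (2 * n + 1) (Mnext K n) (Mmap K n (w, u, \<sigma>))"
  shows "\<exists>ut::real. \<forall>x::real.
           gfun K n (w, u, \<sigma>) x = (\<Prod>i=1..n. (x - u i)^2) * (x - ut)"
proof -
  obtain c where grad: "has_gradient_at (2 * n + 1) (Mnext K n) c (Mmap K n (w, u, \<sigma>))"
    using diff by (auto simp: diff_at_iff_has_gradient_at)
  have "strict_mono_on {1..n} u"
    using W_in by (auto simp: Omega_def strict_mono_on_def)
  then have "inj_on u {1..n}" by (rule strict_mono_on_imp_inj_on)
  then obtain ut where "\<forall>x. poly (residual_poly K (2 * n + 1) c \<sigma>) x = (\<Prod>i=1..n. (x - u i)^2) * (x - ut)"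
    using monic_with_double_roots_factor[of "{1..n}" u "residual_poly K (2 * n + 1) c \<sigma>"]
      degree_residual_poly[OF m0] lead_coeff_residual_poly[OF m0]
      residual_poly_root_at_node[OF inj W_in grad] pderiv_residual_poly_root_at_node[OF inj W_in grad]
    by auto
  then show ?thesis by (auto simp: gfun_eq_residual_poly[OF grad])
qed

end
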